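(* Let $X=(\vec x_i)_{i\ge1}$ be a sequence of nonzero points in $[0,1]^k$ and let $B\ge2$ be a constant. Define $\vec v_i:=B^{2^i}\vec x_i/\|\vec x_i\|_1$ for each $i$, and let $\mathcal{D}$ be the distribution that outputs $\vec v_i$ with probability $1/B^{2^i}$ for each $i$ and outputs $\vec 0$ with the remaining probability $1-\sum_{i\ge1}B^{-2^i}$. Then $\mathrm{ARev}(\mathcal{D})\le\mathrm{AlignGap}(X)+1/B$.
   Context: A mechanism $M$ is a set of options $(\vec q,p)$ with $\vec q\in[0,1]^k$, $p\in\mathbb{R}$, always containing the null option $(\vec 0,0)$; a buyer with values $\vec v\in\mathbb{R}^k_{\ge0}$ selects an option maximizing $\vec v\cdot\vec q-p$ (ties broken arbitrarily; a maximizer is assumed to exist), and $\vec q^M(\vec v),p^M(\vec v)$ denote the allocation and price of the selected option. $\mathrm{ARev}(\mathcal{D},M):=\mathbb{E}_{\vec v\sim\mathcal{D}}[p^M(\vec v)\cdot\mathbf 1(\vec v\text{ is parallel to }\vec q^M(\vec v))]$, $\mathrm{ARev}(\mathcal{D}):=\sup_M\mathrm{ARev}(\mathcal{D},M)$. AlignGap: For $X=(\vec x_i)_{i=1}^N$ a sequence of nonzero points in $[0,1]^k$, let $C=(c_i)_{i=0}^N$ be a sequence of reals with $c_0=0$ and $c_i\in[0,1/\|\vec x_i\|_\infty]$ for $i\ge1$; set $\vec x_0:=\vec 0$. Define $\mathrm{sgap}_i^{X,C}:=\min_{0\le j<i}\vec x_i\cdot(c_i\vec x_i-c_j\vec x_j)$,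 $\mathrm{AlignGap}(X,C):=\sum_{i=1}^N \max\{0,\mathrm{sgap}_i^{X,C}\}/\|\vec x_i\|_1$, and $\mathrm{AlignGap}(X):=\sup_C\mathrm{AlignGap}(X,C)$. *)

theory Defs
  imports "HOL-Analysis.Analysis"
begin

text \<open>Vectors in R^k are modelled as real^'k (k = CARD('k), arbitrary but fixed).\<close>

definition norm1 :: "real^'k \<Rightarrow> real" where
  "norm1 x = (\<Sum>i\<in>UNIV. \<bar>x $ i\<bar>)"

definition norminf :: "real^'k \<Rightarrow> real" where
  "norminf x = Max (range (\<lambda>i. \<bar>x $ i\<bar>))"

definition in_unit_cube :: "real^'k \<Rightarrow> bool" where
  "in_unit_cube q \<longleftrightarrow> (\<forall>i. 0 \<le> q $ i \<and> q $ i \<le> 1)"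

definition parallel :: "real^'k \<Rightarrow> real^'k \<Rightarrow> bool" where
  "parallel u w \<longleftrightarrow> (\<exists>t. u = t *\<^sub>R w) \<or> (\<exists>t. w = t *\<^sub>R u)"

definition mechanism :: "((real^'k) \<times> real) set \<Rightarrow> bool" where
  "mechanism M \<longleftrightarrow> (\<forall>(q,p)\<in>M. in_unit_cube q) \<and> (0, 0) \<in> M"

definition utility :: "real^'k \<Rightarrow> (real^'k) \<times> real \<Rightarrow> real" where
  "utility v o' = v \<bullet> fst o' - snd o'"

text \<open>sel is a (arbitrary) tie-breaking rule: on every value vector in S it picks a
  utility-maximizing option of M.\<close>
definition selects :: "((real^'k) \<times> real) set \<Rightarrow> (real^'k \<Rightarrow> (real^'k) \<times> real) \<Rightarrow> (real^'k) set \<Rightarrow> bool" where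
  "selects M sel S \<longleftrightarrow>
     (\<forall>v\<in>S. sel v \<in> M \<and> (\<forall>o'\<in>M. utility v o' \<le> utility v (sel v)))"

definition aligned_rev :: "(real^'k \<Rightarrow> (real^'k) \<times> real) \<Rightarrow> real^'k \<Rightarrow> real" where
  "aligned_rev sel v = (if parallel v (fst (sel v)) then snd (sel v) else 0)"

definition vpt :: "real \<Rightarrow> (nat \<Rightarrow> real^'k) \<Rightarrow> nat \<Rightarrow> real^'k" where
  "vpt B X i = (B ^ (2 ^ i) / norm1 (X i)) *\<^sub>R X i"

definition supportD :: "real \<Rightarrow> (nat \<Rightarrow> real^'k) \<Rightarrow> (real^'k) set" where
  "supportD B X = insert 0 {vpt B X i | i. i \<ge> 1}"

text \<open>Expectation of the aligned revenue under D: v_i (i >= 1) has probability 1/B^(2^i),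
  the point 0 has the remaining probability. Taken in the extended reals.\<close>
definition ARevD :: "real \<Rightarrow> (nat \<Rightarrow> real^'k) \<Rightarrow> (real^'k \<Rightarrow> (real^'k) \<times> real) \<Rightarrow> ereal" where
  "ARevD B X sel =
     (\<Sum>i. ereal (aligned_rev sel (vpt B X (Suc i)) / B ^ (2 ^ Suc i)))
     + ereal ((1 - (\<Sum>i. 1 / B ^ (2 ^ Suc i))) * aligned_rev sel 0)"

definition ARev_sup :: "real \<Rightarrow> (nat \<Rightarrow> real^'k) \<Rightarrow> ereal" where
  "ARev_sup B X = (SUP (M, sel) \<in> {(M, sel). mechanism M \<and> selects M sel (supportD B X)}.
                      ARevD B X sel)"

definition x0 :: "(nat \<Rightarrow> real^'k) \<Rightarrow> nat \<Rightarrow> real^'k" where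
  "x0 X i = (if i = 0 then 0 else X i)"

definition valid_C :: "(nat \<Rightarrow> real^'k) \<Rightarrow> (nat \<Rightarrow> real) \<Rightarrow> bool" where
  "valid_C X c \<longleftrightarrow> c 0 = 0 \<and> (\<forall>i\<ge>1. 0 \<le> c i \<and> c i \<le> 1 / norminf (X i))"

definition sgap :: "(nat \<Rightarrow> real^'k) \<Rightarrow> (nat \<Rightarrow> real) \<Rightarrow> nat \<Rightarrow> real" where
  "sgap X c i = Min ((\<lambda>j. x0 X i \<bullet> (c i *\<^sub>R x0 X i - c j *\<^sub>R x0 X j)) ` {..<i})"

definition AlignGapC :: "(nat \<Rightarrow> real^'k) \<Rightarrow> (nat \<Rightarrow> real) \<Rightarrow> ereal" where
  "AlignGapC X c = (\<Sum>i. ereal (max 0 (sgap X c (Suc i)) / norm1 (X (Suc i))))"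

definition AlignGap :: "(nat \<Rightarrow> real^'k) \<Rightarrow> ereal" where
  "AlignGap X = (SUP c \<in> {c. valid_C X c}. AlignGapC X c)"

end

theory Submission
  imports Defs
begin

text \<open>Let \<open>(q\<^sub>i, p\<^sub>i)\<close> be the option bought at \<open>v\<^sub>i\<close>, and let \<open>c\<^sub>i\<close> be the factor with
  \<open>q\<^sub>i = c\<^sub>i x\<^sub>i\<close> when \<open>q\<^sub>i\<close> is parallel to \<open>v\<^sub>i\<close> (and \<open>c\<^sub>i = 0\<close> otherwise); since
  \<open>q\<^sub>i\<close> lies in the unit cube, \<open>c\<close> is admissible for AlignGap. For \<open>j < i\<close> we have
  \<open>v\<^sub>i \<bullet> q\<^sub>j \<ge> c\<^sub>j v\<^sub>i \<bullet> x\<^sub>j\<close>, so the incentive constraint of \<open>v\<^sub>i\<close> against the option of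
  \<open>v\<^sub>j\<close> gives \<open>p\<^sub>i \<le> B^(2^i) x\<^sub>i \<bullet> (c\<^sub>i x\<^sub>i - c\<^sub>j x\<^sub>j) / \<parallel>x\<^sub>i\<parallel>\<^sub>1 + p\<^sub>j\<close>, where
  \<open>p\<^sub>j \<le> \<parallel>v\<^sub>j\<parallel>\<^sub>1 = B^(2^j) \<le> B^(2^(i-1))\<close>; against the null option the term \<open>p\<^sub>j\<close> is
  absent. Weighted by the probability \<open>1/B^(2^i)\<close>, the revenue from \<open>v\<^sub>i\<close> is thus at
  most the \<open>i\<close>-th AlignGap term plus \<open>1/B^(2^(i-1))\<close> (nothing for \<open>i = 1\<close>), and these
  errors sum to at most \<open>\<Sum>\<^sub>i\<^sub>\<ge>\<^sub>1 B^(-2i) = 1/(B\<^sup>2 - 1) \<le> 1/B\<close>. The buyer \<open>0\<close>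
  never pays a positive price.\<close>

lemma inner_nonneg_unit_cube:
  fixes v q :: "real^'k"
  assumes "in_unit_cube q" "\<And>k. 0 \<le> v $ k"
  shows "0 \<le> v \<bullet> q"
  using assms unfolding in_unit_cube_def inner_vec_def by (auto intro!: sum_nonneg)

lemma inner_unit_cube_le_sum:
  fixes v q :: "real^'k"
  assumes "in_unit_cube q" "\<And>k. 0 \<le> v $ k"
  shows "v \<bullet> q \<le> (\<Sum>k\<in>UNIV. v $ k)"
  unfolding inner_vec_def
proof (rule sum_mono)
  fix k
  show "v $ k \<bullet> q $ k \<le> v $ k"
    using assms unfolding in_unit_cube_def by (simp add: mult_left_le)
qed

lemma norm1_pos:
  fixes x :: "real^'k"
  assumes "x \<noteq> 0"
  shows "0 < norm1 x"
proof -
  obtain k where "x $ k \<noteq> 0" using assms by (metis vec_eq_iff zero_index)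
  hence "0 < \<bar>x $ k\<bar>" by simp
  also have "\<dots> \<le> norm1 x" unfolding norm1_def by (rule member_le_sum) auto
  finally show ?thesis .
qed

lemma norm1_unit_cube:
  fixes x :: "real^'k"
  assumes "in_unit_cube x"
  shows "norm1 x = (\<Sum>k\<in>UNIV. x $ k)"
  using assms unfolding norm1_def in_unit_cube_def by simp

lemma norminf_unit_cube_attained:
  fixes x :: "real^'k"
  assumes "x \<noteq> 0" "in_unit_cube x"
  obtains k where "norminf x = x $ k" "0 < x $ k"
proof -
  have fin: "finite (range (\<lambda>i. \<bar>x $ i\<bar>))" by simp
  have "norminf x \<in> range (\<lambda>i. \<bar>x $ i\<bar>)"
    unfolding norminf_def by (rule Max_in[OF fin]) auto
  then obtain k where k: "norminf x = \<bar>x $ k\<bar>" by blast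
  have ge: "\<bar>x $ i\<bar> \<le> \<bar>x $ k\<bar>" for i
    using k unfolding norminf_def by (metis Max_ge fin rangeI)
  obtain j where "x $ j \<noteq> 0" using assms(1) by (metis vec_eq_iff zero_index)
  hence "0 < \<bar>x $ k\<bar>" using ge[of j] by simp
  moreover have "0 \<le> x $ k" using assms(2) unfolding in_unit_cube_def by auto
  ultimately show ?thesis using k that by auto
qed

lemma norminf_pos_unit_cube:
  fixes x :: "real^'k"
  assumes "x \<noteq> 0" "in_unit_cube x"
  shows "0 < norminf x"
  using norminf_unit_cube_attained[OF assms] by metis

lemma parallel_scaled_unit_cube:
  fixes x q :: "real^'k"
  assumes "x \<noteq> 0" "in_unit_cube x" "in_unit_cube q" "0 < s"
    and "parallel (s *\<^sub>R x) q"
  shows "\<exists>c. q = c *\<^sub>R x \<and> 0 \<le> c \<and> c \<le> 1 / norminf x"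
proof -
  obtain c where c: "q = c *\<^sub>R x"
  proof (cases "\<exists>t. s *\<^sub>R x = t *\<^sub>R q")
    case True
    then obtain t where t: "s *\<^sub>R x = t *\<^sub>R q" by blast
    with assms have "t \<noteq> 0" by auto
    have "q = (1 / t) *\<^sub>R (t *\<^sub>R q)" using \<open>t \<noteq> 0\<close> by simp
    also have "\<dots> = (s / t) *\<^sub>R x" by (simp flip: t add: divide_inverse mult.commute)
    finally have "q = (s / t) *\<^sub>R x" .
    with that show ?thesis .
  next
    case False
    then obtain t where "q = t *\<^sub>R (s *\<^sub>R x)"
      using assms(5) unfolding parallel_def by blast
    hence "q = (t * s) *\<^sub>R x" by simp
    with that show ?thesis .
  qed
  obtain k where k: "norminf x = x $ k" "0 < x $ k"
    using norminf_unit_cube_attained[OF assms(1,2)] .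
  have "0 \<le> c * x $ k" "c * x $ k \<le> 1"
    using assms(3) unfolding c in_unit_cube_def by auto
  hence "0 \<le> c" "c \<le> 1 / x $ k"
    using k(2) by (auto simp: field_simps zero_le_mult_iff)
  with c k show ?thesis by auto
qed

lemma inverse_power_two_power_le:
  fixes B :: real
  assumes "1 \<le> B"
  shows "1 / B ^ 2 ^ m \<le> (1 / B\<^sup>2) ^ m"
proof -
  have "2 * m \<le> 2 ^ m"
  proof (induction m)
    case (Suc m)
    thus ?case by (cases m) auto
  qed simp
  hence "(B\<^sup>2) ^ m \<le> B ^ 2 ^ m"
    using assms by (simp add: power_mult[symmetric] power_increasing)
  moreover have "0 < (B\<^sup>2) ^ m" using assms by simp
  ultimately show ?thesis by (simp add: power_divide frac_le)
qed

lemma inverse_power_two_power_sums_le: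
  fixes B :: real
  assumes "1 < B"
  shows "summable (\<lambda>i. 1 / B ^ 2 ^ Suc i)" "(\<Sum>i. 1 / B ^ 2 ^ Suc i) \<le> 1 / (B\<^sup>2 - 1)"
proof -
  define r where "r = 1 / B\<^sup>2"
  have "0 < r" "r < 1" using assms by (auto simp: r_def power_one_over[symmetric] power_less_one_iff)
  hence "(\<lambda>i. r ^ i) sums (1 / (1 - r))" by (intro geometric_sums) simp
  hence geo: "(\<lambda>i. r ^ Suc i) sums (1 / (1 - r) - 1)"
    using sums_Suc_iff[of "\<lambda>i. r ^ i"] by simp
  have le: "1 / B ^ 2 ^ Suc i \<le> r ^ Suc i" for i
    unfolding r_def using assms by (intro inverse_power_two_power_le) simp
  show sm: "summable (\<lambda>i. 1 / B ^ 2 ^ Suc i)"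
    using assms by (intro summable_comparison_test'[OF sums_summable[OF geo], of 0]) (use le in auto)
  have "(\<Sum>i. 1 / B ^ 2 ^ Suc i) \<le> 1 / (1 - r) - 1"
    using suminf_le[OF le sm sums_summable[OF geo]] geo by (simp add: sums_iff)
  also have "\<dots> = 1 / (B\<^sup>2 - 1)"
  proof -
    have "1 < B\<^sup>2" using assms less_1_mult[of B B] by (simp add: power2_eq_square)
    hence "B\<^sup>2 - 1 \<noteq> 0" by simp
    thus ?thesis using assms by (simp add: r_def field_simps)
  qed
  finally show "(\<Sum>i. 1 / B ^ 2 ^ Suc i) \<le> 1 / (B\<^sup>2 - 1)" .
qed

lemma inverse_power_two_power_suminf_le_inverse:
  fixes B :: real
  assumes "2 \<le> B"
  shows "summable (\<lambda>i. 1 / B ^ 2 ^ Suc i)" "(\<Sum>i. 1 / B ^ 2 ^ Suc i) \<le> 1 / B"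
proof -
  have "2 * B \<le> B * B" using assms mult_right_mono[of 2 B B] by simp
  hence "B \<le> B\<^sup>2 - 1" using assms unfolding power2_eq_square by linarith
  hence "1 / (B\<^sup>2 - 1) \<le> 1 / B" using assms by (intro divide_left_mono) auto
  thus "(\<Sum>i. 1 / B ^ 2 ^ Suc i) \<le> 1 / B"
    using inverse_power_two_power_sums_le(2)[of B] assms by simp
  show "summable (\<lambda>i. 1 / B ^ 2 ^ Suc i)"
    using inverse_power_two_power_sums_le(1)[of B] assms by simp
qed

lemma suminf_ereal_le_add_suminf:
  fixes a g e l :: "nat \<Rightarrow> real"
  assumes le: "\<And>n. a n \<le> g n + e n" and ge: "\<And>n. - l n \<le> a n"
    and g: "\<And>n. 0 \<le> g n" and e: "\<And>n. 0 \<le> e n" "summable e"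
    and l: "\<And>n. 0 \<le> l n" "summable l"
  shows "(\<Sum>n. ereal (a n)) \<le> (\<Sum>n. ereal (g n)) + ereal (suminf e)"
proof (cases "(\<Sum>n. ereal (g n)) = \<infinity>")
  case True
  thus ?thesis by simp
next
  case False
  have "summable g" using summable_ereal[OF g False] .
  have "summable a"
  proof (rule summable_comparison_test'[of "\<lambda>n. g n + e n + l n" 0])
    show "summable (\<lambda>n. g n + e n + l n)"
      using \<open>summable g\<close> e(2) l(2) by (intro summable_add)
    show "norm (a n) \<le> g n + e n + l n" for n
      using le[of n] ge[of n] g[of n] e(1)[of n] l(1)[of n] by auto
  qed
  have "suminf a \<le> suminf (\<lambda>n. g n + e n)"
    using \<open>summable g\<close> e(2) by (intro suminf_le[OF le \<open>summable a\<close>] summable_add)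
  also have "\<dots> = suminf g + suminf e" using suminf_add[OF \<open>summable g\<close> e(2)] ..
  finally show ?thesis
    using suminf_ereal'[OF \<open>summable a\<close>] suminf_ereal'[OF \<open>summable g\<close>] by simp
qed

locale support_selection =
  fixes X :: "nat \<Rightarrow> real^'k" and B :: real
    and M :: "((real^'k) \<times> real) set" and sel :: "real^'k \<Rightarrow> (real^'k) \<times> real"
  assumes points_nonzero: "\<And>i. 1 \<le> i \<Longrightarrow> X i \<noteq> 0"
    and points_unit_cube: "\<And>i. 1 \<le> i \<Longrightarrow> in_unit_cube (X i)"
    and base_ge: "2 \<le> B"
    and mechanism: "mechanism M"
    and selects: "selects M sel (supportD B X)"
begin

definition alloc :: "nat \<Rightarrow> real^'k" where
  "alloc i = fst (sel (vpt B X i))"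

definition price :: "nat \<Rightarrow> real" where
  "price i = snd (sel (vpt B X i))"

definition scale :: "nat \<Rightarrow> real" where
  "scale i = B ^ 2 ^ i / norm1 (X i)"

definition aligned :: "nat \<Rightarrow> bool" where
  "aligned i \<longleftrightarrow> parallel (vpt B X i) (alloc i)"

definition coeff :: "nat \<Rightarrow> real" where
  "coeff i = (if 1 \<le> i \<and> aligned i
     then SOME c. alloc i = c *\<^sub>R X i \<and> 0 \<le> c \<and> c \<le> 1 / norminf (X i) else 0)"

lemma base_pos: "0 < B"
  using base_ge by simp

lemma vpt_eq_scale: "vpt B X i = scale i *\<^sub>R X i"
  unfolding vpt_def scale_def ..

lemma scale_pos: "1 \<le> i \<Longrightarrow> 0 < scale i"
  unfolding scale_def using norm1_pos[OF points_nonzero] base_pos by simp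

lemma vpt_nonneg: "1 \<le> i \<Longrightarrow> 0 \<le> vpt B X i $ k"
  using points_unit_cube[of i] scale_pos[of i] unfolding vpt_eq_scale in_unit_cube_def by simp

lemma sum_vpt:
  assumes "1 \<le> i"
  shows "(\<Sum>k\<in>UNIV. vpt B X i $ k) = B ^ 2 ^ i"
proof -
  have "(\<Sum>k\<in>UNIV. vpt B X i $ k) = scale i * norm1 (X i)"
    using norm1_unit_cube[OF points_unit_cube[OF assms]]
    by (simp add: vpt_eq_scale sum_distrib_left)
  also have "\<dots> = B ^ 2 ^ i"
    using norm1_pos[OF points_nonzero[OF assms]] by (simp add: scale_def)
  finally show ?thesis .
qed

lemma vpt_in_support: "1 \<le> i \<Longrightarrow> vpt B X i \<in> supportD B X"
  unfolding supportD_def by auto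

lemma sel_in_mechanism: "v \<in> supportD B X \<Longrightarrow> sel v \<in> M"
  using selects unfolding selects_def by blast

lemma sel_optimal: "v \<in> supportD B X \<Longrightarrow> o' \<in> M \<Longrightarrow> utility v o' \<le> utility v (sel v)"
  using selects unfolding selects_def by blast

lemma utility_sel_nonneg: "v \<in> supportD B X \<Longrightarrow> 0 \<le> utility v (sel v)"
  using sel_optimal[of v "(0, 0)"] mechanism unfolding mechanism_def utility_def by simp

lemma alloc_unit_cube: "1 \<le> i \<Longrightarrow> in_unit_cube (alloc i)"
  using mechanism sel_in_mechanism[OF vpt_in_support]
  unfolding mechanism_def alloc_def by (metis case_prod_beta)

lemma price_le_value: "1 \<le> i \<Longrightarrow> price i \<le> vpt B X i \<bullet> alloc i"
  using utility_sel_nonneg[OF vpt_in_support] unfolding utility_def price_def alloc_def by simp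

lemma price_le_level: "1 \<le> i \<Longrightarrow> price i \<le> B ^ 2 ^ i"
  using price_le_value inner_unit_cube_le_sum[OF alloc_unit_cube vpt_nonneg] sum_vpt
  by fastforce

lemma incentive_compatible:
  "1 \<le> i \<Longrightarrow> 1 \<le> j \<Longrightarrow> vpt B X i \<bullet> alloc j - price j \<le> vpt B X i \<bullet> alloc i - price i"
  using sel_optimal[OF vpt_in_support sel_in_mechanism[OF vpt_in_support]]
  unfolding utility_def price_def alloc_def by simp

lemma alloc_eq_coeff:
  assumes "1 \<le> i" "aligned i"
  shows "alloc i = coeff i *\<^sub>R X i \<and> 0 \<le> coeff i \<and> coeff i \<le> 1 / norminf (X i)"
proof -
  have "\<exists>c. alloc i = c *\<^sub>R X i \<and> 0 \<le> c \<and> c \<le> 1 / norminf (X i)"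
    using assms points_nonzero points_unit_cube alloc_unit_cube scale_pos
    by (intro parallel_scaled_unit_cube[of _ _ "scale i"]) (auto simp flip: vpt_eq_scale simp: aligned_def)
  from someI_ex[OF this] show ?thesis using assms unfolding coeff_def by simp
qed

lemma valid_coeff: "valid_C X coeff"
  unfolding valid_C_def
proof (intro conjI allI impI)
  show "coeff 0 = 0" unfolding coeff_def by simp
  fix i :: nat
  assume i: "1 \<le> i"
  show "0 \<le> coeff i" "coeff i \<le> 1 / norminf (X i)"
    using alloc_eq_coeff[OF i] norminf_pos_unit_cube[OF points_nonzero[OF i] points_unit_cube[OF i]]
    by (auto simp: coeff_def)
qed

lemma scaled_coeff_inner_le:
  assumes "1 \<le> i" "1 \<le> j"
  shows "scale i * (coeff j * (X i \<bullet> X j)) \<le> vpt B X i \<bullet> alloc j"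
proof (cases "aligned j")
  case True
  thus ?thesis using alloc_eq_coeff[OF assms(2)] unfolding vpt_eq_scale by simp
next
  case False
  hence "coeff j = 0" unfolding coeff_def by simp
  thus ?thesis using inner_nonneg_unit_cube[OF alloc_unit_cube vpt_nonneg] assms by simp
qed

text \<open>The slack bounds the price \<open>p\<^sub>j \<le> B^(2^j)\<close> of an earlier option \<open>j \<ge> 1\<close>;
  against the null option (\<open>j = 0\<close>) none is needed.\<close>
lemma aligned_price_le_gap_term:
  assumes i: "1 \<le> i" "aligned i" and j: "j < i"
  shows "price i - (if i = 1 then 0 else B ^ 2 ^ (i - 1))
    \<le> scale i * (x0 X i \<bullet> (coeff i *\<^sub>R x0 X i - coeff j *\<^sub>R x0 X j))"
proof -
  have value_i: "vpt B X i \<bullet> alloc i = scale i * (coeff i * (X i \<bullet> X i))"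
    using alloc_eq_coeff[OF i] unfolding vpt_eq_scale by simp
  have slack: "0 \<le> (if i = 1 then 0 else B ^ 2 ^ (i - 1))"
    using base_pos by simp
  show ?thesis
  proof (cases "j = 0")
    case True
    thus ?thesis using price_le_value[OF i(1)] value_i slack i(1)
      by (simp add: x0_def coeff_def inner_diff_right)
  next
    case False
    hence j1: "1 \<le> j" by simp
    have "price j \<le> B ^ 2 ^ j" by (rule price_le_level[OF j1])
    also have "\<dots> \<le> B ^ 2 ^ (i - 1)" using base_ge j by (intro power_increasing) auto
    finally have "price j \<le> (if i = 1 then 0 else B ^ 2 ^ (i - 1))" using j j1 by auto
    moreover have "x0 X i \<bullet> (coeff i *\<^sub>R x0 X i - coeff j *\<^sub>R x0 X j)
        = coeff i * (X i \<bullet> X i) - coeff j * (X i \<bullet> X j)"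
      using i(1) j1 by (simp add: x0_def inner_diff_right)
    ultimately show ?thesis
      using incentive_compatible[OF i(1) j1] scaled_coeff_inner_le[OF i(1) j1] value_i
      by (simp add: right_diff_distrib)
  qed
qed

lemma aligned_rev_le_sgap:
  assumes i: "1 \<le> i"
  shows "aligned_rev sel (vpt B X i)
    \<le> scale i * max 0 (sgap X coeff i) + (if i = 1 then 0 else B ^ 2 ^ (i - 1))"
proof (cases "aligned i")
  case False
  thus ?thesis using scale_pos[OF i] base_pos by (simp add: aligned_rev_def aligned_def alloc_def)
next
  case True
  have "(price i - (if i = 1 then 0 else B ^ 2 ^ (i - 1))) / scale i \<le> sgap X coeff i"
    unfolding sgap_def
  proof (rule Min.boundedI)
    show "(\<lambda>j. x0 X i \<bullet> (coeff i *\<^sub>R x0 X i - coeff j *\<^sub>R x0 X j)) ` {..<i} \<noteq> {}"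
      using i by (auto simp: lessThan_empty_iff)
    show "(price i - (if i = 1 then 0 else B ^ 2 ^ (i - 1))) / scale i \<le> a"
      if "a \<in> (\<lambda>j. x0 X i \<bullet> (coeff i *\<^sub>R x0 X i - coeff j *\<^sub>R x0 X j)) ` {..<i}" for a
      using that aligned_price_le_gap_term[OF i True] scale_pos[OF i]
      by (auto simp: divide_le_eq mult.commute)
  qed simp
  hence "price i - (if i = 1 then 0 else B ^ 2 ^ (i - 1)) \<le> scale i * sgap X coeff i"
    using scale_pos[OF i] by (simp add: divide_le_eq mult.commute)
  also have "\<dots> \<le> scale i * max 0 (sgap X coeff i)"
    using scale_pos[OF i] by (intro mult_left_mono) auto
  finally show ?thesis using True by (simp add: aligned_rev_def aligned_def alloc_def price_def)
qed

text \<open>Incentive compatibility of \<open>v\<^sub>1\<close> bounds every price from below, so the revenue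
  series converges absolutely once the AlignGap series does.\<close>
lemma aligned_rev_ge_utility:
  assumes i: "1 \<le> i"
  shows "- utility (vpt B X 1) (sel (vpt B X 1)) \<le> aligned_rev sel (vpt B X i)"
proof -
  have "- utility (vpt B X 1) (sel (vpt B X 1)) \<le> price i"
    using incentive_compatible[of 1 i] i inner_nonneg_unit_cube[OF alloc_unit_cube[OF i] vpt_nonneg[of 1]]
    by (simp add: utility_def alloc_def price_def)
  moreover have "0 \<le> utility (vpt B X 1) (sel (vpt B X 1))"
    by (rule utility_sel_nonneg[OF vpt_in_support]) simp
  ultimately show ?thesis by (simp add: aligned_rev_def price_def)
qed

lemma aligned_rev_zero_nonpos: "aligned_rev sel 0 \<le> 0"
  using utility_sel_nonneg[of 0] unfolding supportD_def utility_def aligned_rev_def parallel_def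
  by auto

lemma aligned_rev_weighted_le:
  "aligned_rev sel (vpt B X (Suc n)) / B ^ 2 ^ Suc n
    \<le> max 0 (sgap X coeff (Suc n)) / norm1 (X (Suc n)) + (if n = 0 then 0 else 1 / B ^ 2 ^ n)"
proof -
  have B: "0 < B ^ 2 ^ Suc n" using base_pos by simp
  have "aligned_rev sel (vpt B X (Suc n)) / B ^ 2 ^ Suc n
      \<le> (scale (Suc n) * max 0 (sgap X coeff (Suc n))
          + (if Suc n = 1 then 0 else B ^ 2 ^ (Suc n - 1))) / B ^ 2 ^ Suc n"
    by (intro divide_right_mono aligned_rev_le_sgap less_imp_le[OF B]) simp
  also have "\<dots> = max 0 (sgap X coeff (Suc n)) / norm1 (X (Suc n))
      + (if n = 0 then 0 else 1 / B ^ 2 ^ n)"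
  proof -
    have "B ^ 2 ^ Suc n = B ^ 2 ^ n * B ^ 2 ^ n"
      by (simp add: power_mult[symmetric] power2_eq_square[symmetric] mult.commute)
    thus ?thesis using B base_pos by (simp add: scale_def add_divide_distrib)
  qed
  finally show ?thesis .
qed

lemma ARevD_le_AlignGapC: "ARevD B X sel \<le> AlignGapC X coeff + ereal (1 / B)"
proof -
  define a where "a n = aligned_rev sel (vpt B X (Suc n)) / B ^ 2 ^ Suc n" for n
  define g where "g n = max 0 (sgap X coeff (Suc n)) / norm1 (X (Suc n))" for n
  define e where "e n = (if n = 0 then 0 else 1 / B ^ 2 ^ n)" for n
  define u where "u = utility (vpt B X 1) (sel (vpt B X 1))"
  define w where "w = (\<lambda>i. 1 / B ^ 2 ^ Suc i)"
  have B: "0 < B ^ 2 ^ n" for n using base_pos by simp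
  have w: "summable w" "suminf w \<le> 1 / B"
    using inverse_power_two_power_suminf_le_inverse[OF base_ge] unfolding w_def by simp_all
  have "(\<lambda>n. e (Suc n)) sums suminf w"
    using summable_sums[OF w(1)] by (simp add: e_def w_def)
  hence "e sums (suminf w + e 0)" by (simp only: sums_Suc_iff)
  hence e: "e sums suminf w" by (simp add: e_def)
  have "(\<Sum>n. ereal (a n)) \<le> (\<Sum>n. ereal (g n)) + ereal (suminf e)"
  proof (rule suminf_ereal_le_add_suminf)
    show "a n \<le> g n + e n" for n
      using aligned_rev_weighted_le by (simp add: a_def g_def e_def)
    show "- (u * w n) \<le> a n" for n
      using divide_right_mono[OF aligned_rev_ge_utility[of "Suc n"] less_imp_le[OF B[of "Suc n"]]]
      by (simp add: a_def w_def u_def)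
    show "0 \<le> g n" for n unfolding g_def using norm1_pos[OF points_nonzero[of "Suc n"]] by simp
    show "0 \<le> e n" for n unfolding e_def using B[of n] by simp
    show "summable e" using e by (rule sums_summable)
    show "0 \<le> u * w n" for n
      using utility_sel_nonneg[OF vpt_in_support[of 1]] B[of "Suc n"] by (simp add: u_def w_def)
    show "summable (\<lambda>n. u * w n)" using w(1) by (rule summable_mult)
  qed
  also have "\<dots> \<le> AlignGapC X coeff + ereal (1 / B)"
    using w(2) sums_unique[OF e] by (simp add: AlignGapC_def g_def add_left_mono)
  finally have "(\<Sum>n. ereal (a n)) \<le> AlignGapC X coeff + ereal (1 / B)" .
  moreover have "1 / B \<le> 1" using base_ge by simp
  hence "(1 - suminf w) * aligned_rev sel 0 \<le> 0"
    using w(2) aligned_rev_zero_nonpos by (intro mult_nonneg_nonpos) auto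
  ultimately show ?thesis
    unfolding ARevD_def a_def[symmetric] w_def[symmetric]
    by (metis add_mono add.right_neutral ereal_less_eq(3) zero_ereal_def)
qed

end

theorem propositionC1:
  fixes X :: "nat \<Rightarrow> real^'k" and B :: real
  assumes "\<forall>i\<ge>1. X i \<noteq> 0 \<and> in_unit_cube (X i)"
    and "B \<ge> 2"
  shows "ARev_sup B X \<le> AlignGap X + ereal (1 / B)"
  unfolding ARev_sup_def
proof (rule SUP_least, clarify)
  fix M sel
  assume "mechanism M" "selects M sel (supportD B X)"
  then interpret support_selection X B M sel
    using assms by unfold_locales auto
  have "AlignGapC X coeff \<le> AlignGap X"
    unfolding AlignGap_def using valid_coeff by (intro SUP_upper) simp
  thus "ARevD B X sel \<le> AlignGap X + ereal (1 / B)"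
    using ARevD_le_AlignGapC by (metis add_right_mono order_trans)
qed

end
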